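(* Let $\mathcal{G}\rightrightarrows M$ be a locally subductive diffeological groupoid. Then its abelianization $\mathcal{G}^{ab}=\mathcal{G}/(\mathcal{G},\mathcal{G})$ (with the quotient diffeology) is a locally subductive diffeological groupoid.
   Context: A diffeological groupoid is a groupoid object in diffeological spaces; $(\mathcal{G},\mathcal{G})=\bigcup_x(\mathcal{G}_x,\mathcal{G}_x)$ is the union of the commutator subgroups of the isotropy groups, and $\mathcal{G}/(\mathcal{G},\mathcal{G})$ carries the quotient diffeology (maps locally constant or locally of the form $q\circ Q$ with $Q$ a plot of $\mathcal{G}$). A smooth map $f:X\to X'$ is locally subductive at $x$ if for every plot $P$ of $X'$ with $P(0)=f(x)$ there are an open neighborhood $V$ of $0$ and a plot $Q:V\to X$ with $Q(0)=x$ and $f\circ Q=P|_V$; it is a local subduction if locally subductive at all points. A diffeological groupoid is locally subductive if its source and target maps are local subductions. *)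

theory Defs
  imports Complex_Main "HOL-Library.FuncSet"
begin

text \<open>R^n is represented as the set of sequences nat => real vanishing from index n on.\<close>

definition Eucl :: "nat \<Rightarrow> (nat \<Rightarrow> real) set" where
  "Eucl n = {x. \<forall>i\<ge>n. x i = 0}"

definition eopen :: "nat \<Rightarrow> (nat \<Rightarrow> real) set \<Rightarrow> bool" where
  "eopen n U \<longleftrightarrow> U \<subseteq> Eucl n \<and>
     (\<forall>x\<in>U. \<exists>e>0. \<forall>y\<in>Eucl n. (\<forall>i<n. \<bar>y i - x i\<bar> < e) \<longrightarrow> y \<in> U)"

definition econt :: "nat \<Rightarrow> (nat \<Rightarrow> real) set \<Rightarrow> ((nat \<Rightarrow> real) \<Rightarrow> real) \<Rightarrow> bool" where
  "econt n U f \<longleftrightarrow> (\<forall>x\<in>U. \<forall>e>0. \<exists>d>0. \<forall>y\<in>U.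
      (\<forall>i<n. \<bar>y i - x i\<bar> < d) \<longrightarrow> \<bar>f y - f x\<bar> < e)"

definition has_pd :: "(nat \<Rightarrow> real) set \<Rightarrow> ((nat \<Rightarrow> real) \<Rightarrow> real) \<Rightarrow> nat
    \<Rightarrow> ((nat \<Rightarrow> real) \<Rightarrow> real) \<Rightarrow> bool" where
  "has_pd U f i g \<longleftrightarrow> (\<forall>x\<in>U. ((\<lambda>t. f (x(i := x i + t))) has_real_derivative g x) (at 0))"

primrec Ck :: "nat \<Rightarrow> (nat \<Rightarrow> real) set \<Rightarrow> nat \<Rightarrow> ((nat \<Rightarrow> real) \<Rightarrow> real) set" where
  "Ck n U 0 = {f. econt n U f}"
| "Ck n U (Suc k) = {f. econt n U f \<and> (\<forall>i<n. \<exists>g\<in>Ck n U k. has_pd U f i g)}"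

definition smooth_fun :: "nat \<Rightarrow> (nat \<Rightarrow> real) set \<Rightarrow> ((nat \<Rightarrow> real) \<Rightarrow> real) \<Rightarrow> bool" where
  "smooth_fun n U f \<longleftrightarrow> (\<forall>k. f \<in> Ck n U k)"

definition smooth_map :: "nat \<Rightarrow> (nat \<Rightarrow> real) set \<Rightarrow> nat
    \<Rightarrow> ((nat \<Rightarrow> real) \<Rightarrow> (nat \<Rightarrow> real)) \<Rightarrow> bool" where
  "smooth_map m V n F \<longleftrightarrow> (\<forall>x\<in>V. F x \<in> Eucl n) \<and> (\<forall>j<n. smooth_fun m V (\<lambda>x. F x j))"

text \<open>A plot is a triple (n, U, P) with U open in R^n and P : U -> X (extensional).\<close>
type_synonym 'a diffeology = "(nat \<times> (nat \<Rightarrow> real) set \<times> ((nat \<Rightarrow> real) \<Rightarrow> 'a)) set"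

definition diffeology :: "'a set \<Rightarrow> 'a diffeology \<Rightarrow> bool" where
  "diffeology X D \<longleftrightarrow>
     (\<forall>n U P. (n, U, P) \<in> D \<longrightarrow> eopen n U \<and> P \<in> U \<rightarrow> X \<and> P \<in> extensional U)
   \<and> (\<forall>n U x. eopen n U \<and> x \<in> X \<longrightarrow> (n, U, restrict (\<lambda>_. x) U) \<in> D)
   \<and> (\<forall>n U P. eopen n U \<and> P \<in> U \<rightarrow> X \<and> P \<in> extensional U \<and>
        (\<forall>u\<in>U. \<exists>V. eopen n V \<and> u \<in> V \<and> V \<subseteq> U \<and> (n, V, restrict P V) \<in> D)
        \<longrightarrow> (n, U, P) \<in> D)
   \<and> (\<forall>n U P m V F. (n, U, P) \<in> D \<and> eopen m V \<and> smooth_map m V n F \<and> F ` V \<subseteq> U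
        \<longrightarrow> (m, V, restrict (P \<circ> F) V) \<in> D)"

definition dsmooth :: "'a diffeology \<Rightarrow> 'b diffeology \<Rightarrow> ('a \<Rightarrow> 'b) \<Rightarrow> bool" where
  "dsmooth DX DY f \<longleftrightarrow> (\<forall>n U P. (n, U, P) \<in> DX \<longrightarrow> (n, U, restrict (f \<circ> P) U) \<in> DY)"

definition prod_diff :: "'a diffeology \<Rightarrow> 'b diffeology \<Rightarrow> ('a \<times> 'b) diffeology" where
  "prod_diff D1 D2 = {(n, U, P). eopen n U \<and> P \<in> extensional U \<and>
      (n, U, restrict (fst \<circ> P) U) \<in> D1 \<and> (n, U, restrict (snd \<circ> P) U) \<in> D2}"

definition sub_diff :: "'a diffeology \<Rightarrow> 'a set \<Rightarrow> 'a diffeology" where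
  "sub_diff D A = {(n, U, P). (n, U, P) \<in> D \<and> P ` U \<subseteq> A}"

definition quot_diff :: "'a set \<Rightarrow> 'a diffeology \<Rightarrow> ('a \<Rightarrow> 'b) \<Rightarrow> 'b diffeology" where
  "quot_diff X D q = {(n, U, P). eopen n U \<and> P \<in> extensional U \<and> P \<in> U \<rightarrow> q ` X \<and>
      (\<forall>u\<in>U. \<exists>V. eopen n V \<and> u \<in> V \<and> V \<subseteq> U \<and>
         ((\<exists>c. \<forall>v\<in>V. P v = c) \<or> (\<exists>Q. (n, V, Q) \<in> D \<and> (\<forall>v\<in>V. P v = q (Q v)))))}"

definition zvec :: "nat \<Rightarrow> real" where "zvec = (\<lambda>_. 0)"

definition locally_subductive_at :: "'a diffeology \<Rightarrow> 'b diffeology \<Rightarrow> ('a \<Rightarrow> 'b) \<Rightarrow> 'a \<Rightarrow> bool" where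
  "locally_subductive_at DX DY f x \<longleftrightarrow>
     (\<forall>n U P. (n, U, P) \<in> DY \<and> zvec \<in> U \<and> P zvec = f x \<longrightarrow>
        (\<exists>V Q. eopen n V \<and> zvec \<in> V \<and> V \<subseteq> U \<and> (n, V, Q) \<in> DX \<and> Q zvec = x \<and>
               (\<forall>v\<in>V. f (Q v) = P v)))"

definition local_subduction :: "'a set \<Rightarrow> 'a diffeology \<Rightarrow> 'b diffeology \<Rightarrow> ('a \<Rightarrow> 'b) \<Rightarrow> bool" where
  "local_subduction X DX DY f \<longleftrightarrow> dsmooth DX DY f \<and> (\<forall>x\<in>X. locally_subductive_at DX DY f x)"

record ('g, 'm) dgpd =
  arr :: "'g set"
  obj :: "'m set"
  darr :: "'g diffeology"
  dobj :: "'m diffeology"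
  gsrc :: "'g \<Rightarrow> 'm"
  gtgt :: "'g \<Rightarrow> 'm"
  gid :: "'m \<Rightarrow> 'g"
  ginv :: "'g \<Rightarrow> 'g"
  gcomp :: "'g \<Rightarrow> 'g \<Rightarrow> 'g"

definition composable :: "('g, 'm, 'z) dgpd_scheme \<Rightarrow> ('g \<times> 'g) set" where
  "composable G = {(g, h). g \<in> arr G \<and> h \<in> arr G \<and> gsrc G g = gtgt G h}"

definition groupoid :: "('g, 'm, 'z) dgpd_scheme \<Rightarrow> bool" where
  "groupoid G \<longleftrightarrow>
     gsrc G \<in> arr G \<rightarrow> obj G \<and> gtgt G \<in> arr G \<rightarrow> obj G \<and> gid G \<in> obj G \<rightarrow> arr G
   \<and> (\<forall>x\<in>obj G. gsrc G (gid G x) = x \<and> gtgt G (gid G x) = x)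
   \<and> (\<forall>(g, h)\<in>composable G. gcomp G g h \<in> arr G \<and>
        gsrc G (gcomp G g h) = gsrc G h \<and> gtgt G (gcomp G g h) = gtgt G g)
   \<and> (\<forall>f\<in>arr G. \<forall>g\<in>arr G. \<forall>h\<in>arr G. gsrc G f = gtgt G g \<and> gsrc G g = gtgt G h \<longrightarrow>
        gcomp G (gcomp G f g) h = gcomp G f (gcomp G g h))
   \<and> (\<forall>g\<in>arr G. gcomp G (gid G (gtgt G g)) g = g \<and> gcomp G g (gid G (gsrc G g)) = g)
   \<and> (\<forall>g\<in>arr G. ginv G g \<in> arr G \<and> gsrc G (ginv G g) = gtgt G g \<and> gtgt G (ginv G g) = gsrc G g
        \<and> gcomp G (ginv G g) g = gid G (gsrc G g) \<and> gcomp G g (ginv G g) = gid G (gtgt G g))"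

definition diffeological_groupoid :: "('g, 'm, 'z) dgpd_scheme \<Rightarrow> bool" where
  "diffeological_groupoid G \<longleftrightarrow> groupoid G
   \<and> diffeology (arr G) (darr G) \<and> diffeology (obj G) (dobj G)
   \<and> dsmooth (darr G) (dobj G) (gsrc G) \<and> dsmooth (darr G) (dobj G) (gtgt G)
   \<and> dsmooth (dobj G) (darr G) (gid G) \<and> dsmooth (darr G) (darr G) (ginv G)
   \<and> dsmooth (sub_diff (prod_diff (darr G) (darr G)) (composable G)) (darr G)
        (\<lambda>p. gcomp G (fst p) (snd p))"

definition locally_subductive_dgpd :: "('g, 'm, 'z) dgpd_scheme \<Rightarrow> bool" where
  "locally_subductive_dgpd G \<longleftrightarrow> diffeological_groupoid G
   \<and> local_subduction (arr G) (darr G) (dobj G) (gsrc G)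
   \<and> local_subduction (arr G) (darr G) (dobj G) (gtgt G)"

inductive_set comm_sub :: "('g, 'm, 'z) dgpd_scheme \<Rightarrow> 'm \<Rightarrow> 'g set" for G x where
  unit: "x \<in> obj G \<Longrightarrow> gid G x \<in> comm_sub G x"
| comm: "\<lbrakk>a \<in> arr G; b \<in> arr G; gsrc G a = x; gtgt G a = x; gsrc G b = x; gtgt G b = x\<rbrakk>
     \<Longrightarrow> gcomp G (gcomp G a b) (gcomp G (ginv G a) (ginv G b)) \<in> comm_sub G x"
| mult: "\<lbrakk>k \<in> comm_sub G x; l \<in> comm_sub G x\<rbrakk> \<Longrightarrow> gcomp G k l \<in> comm_sub G x"
| inverse: "k \<in> comm_sub G x \<Longrightarrow> ginv G k \<in> comm_sub G x"

definition comm_subgpd :: "('g, 'm, 'z) dgpd_scheme \<Rightarrow> 'g set" where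
  "comm_subgpd G = (\<Union>x\<in>obj G. comm_sub G x)"

definition ab_rel :: "('g, 'm, 'z) dgpd_scheme \<Rightarrow> 'g \<Rightarrow> 'g \<Rightarrow> bool" where
  "ab_rel G g h \<longleftrightarrow> g \<in> arr G \<and> h \<in> arr G \<and>
     (\<exists>k\<in>comm_subgpd G. gsrc G k = gtgt G g \<and> h = gcomp G k g)"

definition ab_class :: "('g, 'm, 'z) dgpd_scheme \<Rightarrow> 'g \<Rightarrow> 'g set" where
  "ab_class G g = {h. ab_rel G g h}"

definition abelianization :: "('g, 'm, 'z) dgpd_scheme \<Rightarrow> ('g set, 'm) dgpd" where
  "abelianization G = \<lparr>
     arr = ab_class G ` arr G,
     obj = obj G,
     darr = quot_diff (arr G) (darr G) (ab_class G),
     dobj = dobj G,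
     gsrc = (\<lambda>c. gsrc G (SOME g. g \<in> c)),
     gtgt = (\<lambda>c. gtgt G (SOME g. g \<in> c)),
     gid = (\<lambda>x. ab_class G (gid G x)),
     ginv = (\<lambda>c. ab_class G (ginv G (SOME g. g \<in> c))),
     gcomp = (\<lambda>c d. ab_class G (gcomp G (SOME g. g \<in> c) (SOME h. h \<in> d))) \<rparr>"

end

theory Submission
  imports Defs
begin

text \<open>The commutator subgroups of the isotropy groups form a normal subgroupoid, so congruence
  modulo it is compatible with composition and inversion, and the groupoid operations descend to
  classes. In the quotient diffeology every plot lifts locally to a plot of the arrows. Hence a
  map out of the quotient is smooth as soon as its composite with the quotient map is, which gives
  smoothness of the induced source, target and inversion; composition is handled by lifting a plot
  of composable pairs of classes to a plot of composable pairs of arrows. Finally, a local lift of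
  a plot of the objects through the source (or target) of the groupoid, followed by the quotient
  map, is a local lift through the induced source (or target).\<close>

section \<open>Groupoid algebra\<close>

locale groupoid_structure =
  fixes G :: "('g, 'm, 'z) dgpd_scheme"
  assumes groupoid: "groupoid G"
begin

lemma src_closed: "g \<in> arr G \<Longrightarrow> gsrc G g \<in> obj G"
  and tgt_closed: "g \<in> arr G \<Longrightarrow> gtgt G g \<in> obj G"
  and id_closed [simp]: "x \<in> obj G \<Longrightarrow> gid G x \<in> arr G"
  and src_id [simp]: "x \<in> obj G \<Longrightarrow> gsrc G (gid G x) = x"
  and tgt_id [simp]: "x \<in> obj G \<Longrightarrow> gtgt G (gid G x) = x"
  using groupoid unfolding groupoid_def by auto

lemma comp_closed [simp]:
    "a \<in> arr G \<Longrightarrow> b \<in> arr G \<Longrightarrow> gsrc G a = gtgt G b \<Longrightarrow> gcomp G a b \<in> arr G"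
  and src_comp [simp]:
    "a \<in> arr G \<Longrightarrow> b \<in> arr G \<Longrightarrow> gsrc G a = gtgt G b \<Longrightarrow> gsrc G (gcomp G a b) = gsrc G b"
  and tgt_comp [simp]:
    "a \<in> arr G \<Longrightarrow> b \<in> arr G \<Longrightarrow> gsrc G a = gtgt G b \<Longrightarrow> gtgt G (gcomp G a b) = gtgt G a"
  using groupoid unfolding groupoid_def composable_def by auto

lemma comp_assoc [simp]:
  "f \<in> arr G \<Longrightarrow> g \<in> arr G \<Longrightarrow> h \<in> arr G \<Longrightarrow> gsrc G f = gtgt G g \<Longrightarrow> gsrc G g = gtgt G h \<Longrightarrow>
   gcomp G (gcomp G f g) h = gcomp G f (gcomp G g h)"
  using groupoid unfolding groupoid_def by blast

lemma comp_id_left [simp]: "g \<in> arr G \<Longrightarrow> x = gtgt G g \<Longrightarrow> gcomp G (gid G x) g = g"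
  and comp_id_right [simp]: "g \<in> arr G \<Longrightarrow> x = gsrc G g \<Longrightarrow> gcomp G g (gid G x) = g"
  using groupoid unfolding groupoid_def by blast+

lemma inv_closed [simp]: "g \<in> arr G \<Longrightarrow> ginv G g \<in> arr G"
  and src_inv [simp]: "g \<in> arr G \<Longrightarrow> gsrc G (ginv G g) = gtgt G g"
  and tgt_inv [simp]: "g \<in> arr G \<Longrightarrow> gtgt G (ginv G g) = gsrc G g"
  and comp_inv_left [simp]: "g \<in> arr G \<Longrightarrow> gcomp G (ginv G g) g = gid G (gsrc G g)"
  and comp_inv_right [simp]: "g \<in> arr G \<Longrightarrow> gcomp G g (ginv G g) = gid G (gtgt G g)"
  using groupoid unfolding groupoid_def by blast+

lemma comp_inv_cancel_left [simp]:
  assumes "g \<in> arr G" "h \<in> arr G" "gsrc G g = gtgt G h"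
  shows "gcomp G (ginv G g) (gcomp G g h) = h"
proof -
  have "gcomp G (ginv G g) (gcomp G g h) = gcomp G (gcomp G (ginv G g) g) h"
    by (rule comp_assoc[symmetric]) (use assms in auto)
  also have "\<dots> = h"
    using assms by (simp add: src_closed)
  finally show ?thesis .
qed

lemma comp_inv_cancel_right [simp]:
  assumes "g \<in> arr G" "h \<in> arr G" "gtgt G g = gtgt G h"
  shows "gcomp G g (gcomp G (ginv G g) h) = h"
proof -
  have "gcomp G g (gcomp G (ginv G g) h) = gcomp G (gcomp G g (ginv G g)) h"
    by (rule comp_assoc[symmetric]) (use assms in auto)
  also have "\<dots> = h"
    using assms by (simp add: tgt_closed)
  finally show ?thesis .
qed

lemma inv_unique:
  assumes "a \<in> arr G" "b \<in> arr G" "gsrc G a = gtgt G b" "gcomp G a b = gid G (gtgt G a)"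
  shows "ginv G a = b"
proof -
  have "b = gcomp G (ginv G a) (gcomp G a b)"
    using assms(1-3) by simp
  also have "\<dots> = ginv G a"
    using assms by simp
  finally show ?thesis ..
qed

lemma inv_inv [simp]: "a \<in> arr G \<Longrightarrow> ginv G (ginv G a) = a"
  by (rule inv_unique) (auto simp: src_closed)

lemma inv_comp [simp]:
  "a \<in> arr G \<Longrightarrow> b \<in> arr G \<Longrightarrow> gsrc G a = gtgt G b \<Longrightarrow>
   ginv G (gcomp G a b) = gcomp G (ginv G b) (ginv G a)"
  by (rule inv_unique) (auto simp: src_closed tgt_closed)

section \<open>The commutator subgroupoid and the abelianization\<close>

lemma comm_sub_isotropy:
  "k \<in> comm_sub G x \<Longrightarrow> k \<in> arr G \<and> gsrc G k = x \<and> gtgt G k = x \<and> x \<in> obj G"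
  by (induction rule: comm_sub.induct) (auto simp: src_closed)

lemma comm_sub_conj:
  assumes "l \<in> comm_sub G (gsrc G a)" "a \<in> arr G"
  shows "gcomp G a (gcomp G l (ginv G a)) \<in> comm_sub G (gtgt G a)"
  using assms
proof (induction l rule: comm_sub.induct)
  case unit
  then show ?case
    by (auto intro: comm_sub.unit simp: tgt_closed)
next
  case (comm b c)
  let ?conj = "\<lambda>g. gcomp G a (gcomp G g (ginv G a))"
  have "gcomp G (gcomp G (?conj b) (?conj c)) (gcomp G (ginv G (?conj b)) (ginv G (?conj c)))
      \<in> comm_sub G (gtgt G a)"
    by (rule comm_sub.comm) (use comm in auto)
  moreover have "gcomp G (gcomp G (?conj b) (?conj c)) (gcomp G (ginv G (?conj b)) (ginv G (?conj c)))
      = ?conj (gcomp G (gcomp G b c) (gcomp G (ginv G b) (ginv G c)))"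
    using comm by simp
  ultimately show ?case
    by simp
next
  case (mult k l)
  then show ?case
    using comm_sub.mult[OF mult.IH] comm_sub_isotropy[OF mult.hyps(1)] comm_sub_isotropy[OF mult.hyps(2)]
    by simp
next
  case (inverse k)
  then show ?case
    using comm_sub.inverse[OF inverse.IH] comm_sub_isotropy[OF inverse.hyps] by simp
qed

lemma ab_class_iff:
  "h \<in> ab_class G g \<longleftrightarrow>
     g \<in> arr G \<and> h \<in> arr G \<and> (\<exists>k. k \<in> comm_sub G (gtgt G g) \<and> h = gcomp G k g)"
  unfolding ab_class_def ab_rel_def comm_subgpd_def using comm_sub_isotropy by fastforce

lemma ab_class_self: "g \<in> arr G \<Longrightarrow> g \<in> ab_class G g"
  unfolding ab_class_iff
  by (auto intro!: exI[of _ "gid G (gtgt G g)"] comm_sub.unit simp: tgt_closed)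

lemma ab_classD:
  "h \<in> ab_class G g \<Longrightarrow> g \<in> arr G \<and> h \<in> arr G \<and> gsrc G h = gsrc G g \<and> gtgt G h = gtgt G g"
  unfolding ab_class_iff using comm_sub_isotropy by fastforce

lemma ab_class_sym: "h \<in> ab_class G g \<Longrightarrow> g \<in> ab_class G h"
proof -
  assume h: "h \<in> ab_class G g"
  then obtain k where k: "g \<in> arr G" "h \<in> arr G" "k \<in> comm_sub G (gtgt G g)" "h = gcomp G k g"
    unfolding ab_class_iff by blast
  then show ?thesis
    unfolding ab_class_iff using ab_classD[OF h] comm_sub_isotropy[OF k(3)]
    by (auto intro!: exI[of _ "ginv G k"] comm_sub.inverse)
qed

lemma ab_class_trans: "h \<in> ab_class G g \<Longrightarrow> j \<in> ab_class G h \<Longrightarrow> j \<in> ab_class G g"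
proof -
  assume h: "h \<in> ab_class G g" and j: "j \<in> ab_class G h"
  obtain k where k: "g \<in> arr G" "k \<in> comm_sub G (gtgt G g)" "h = gcomp G k g"
    using h unfolding ab_class_iff by blast
  obtain l where l: "j \<in> arr G" "l \<in> comm_sub G (gtgt G h)" "j = gcomp G l h"
    using j unfolding ab_class_iff by blast
  show ?thesis
    unfolding ab_class_iff using k l ab_classD[OF h] comm_sub_isotropy[OF k(2)] comm_sub_isotropy[OF l(2)]
    by (auto intro!: exI[of _ "gcomp G l k"] comm_sub.mult)
qed

lemma ab_class_eq: "h \<in> ab_class G g \<Longrightarrow> ab_class G h = ab_class G g"
  using ab_class_sym ab_class_trans by blast

lemma some_in_ab_class: "g \<in> arr G \<Longrightarrow> (SOME h. h \<in> ab_class G g) \<in> ab_class G g"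
  by (rule someI) (rule ab_class_self)

text \<open>For a' = k a and b' = l b we have a' b' = (k (a l a\<inverse>)) (a b).\<close>

lemma ab_class_comp:
  assumes a': "a' \<in> ab_class G a" and b': "b' \<in> ab_class G b" and ab: "gsrc G a = gtgt G b"
  shows "ab_class G (gcomp G a' b') = ab_class G (gcomp G a b)"
proof -
  obtain k where k: "a \<in> arr G" "a' \<in> arr G" "k \<in> comm_sub G (gtgt G a)" "a' = gcomp G k a"
    using a' unfolding ab_class_iff by blast
  obtain l where l: "b \<in> arr G" "b' \<in> arr G" "l \<in> comm_sub G (gtgt G b)" "b' = gcomp G l b"
    using b' unfolding ab_class_iff by blast
  have conj: "gcomp G a (gcomp G l (ginv G a)) \<in> comm_sub G (gtgt G a)"
    using comm_sub_conj[of l a] l(3) k(1) ab by simp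
  have "gcomp G a' b' \<in> ab_class G (gcomp G a b)"
    unfolding ab_class_iff
    using k l ab comm_sub_isotropy[OF k(3)] comm_sub_isotropy[OF l(3)] comm_sub_isotropy[OF conj]
    by (auto intro!: exI[of _ "gcomp G k (gcomp G a (gcomp G l (ginv G a)))"] comm_sub.mult[OF k(3) conj])
  then show ?thesis
    by (rule ab_class_eq)
qed

lemma ab_class_inv:
  assumes a': "a' \<in> ab_class G a"
  shows "ab_class G (ginv G a') = ab_class G (ginv G a)"
proof -
  obtain k where k: "a \<in> arr G" "a' \<in> arr G" "k \<in> comm_sub G (gtgt G a)" "a' = gcomp G k a"
    using a' unfolding ab_class_iff by blast
  have conj: "gcomp G (ginv G a) (gcomp G (ginv G k) a) \<in> comm_sub G (gsrc G a)"
    using comm_sub_conj[OF _ inv_closed[OF k(1)]] comm_sub.inverse[OF k(3)] k(1) by simp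
  have "ginv G a' \<in> ab_class G (ginv G a)"
    unfolding ab_class_iff using k comm_sub_isotropy[OF k(3)] comm_sub_isotropy[OF conj]
    by (auto intro!: exI[of _ "gcomp G (ginv G a) (gcomp G (ginv G k) a)"] conj)
  then show ?thesis
    by (rule ab_class_eq)
qed

lemma abelianization_simps:
  "arr (abelianization G) = ab_class G ` arr G"
  "obj (abelianization G) = obj G"
  "darr (abelianization G) = quot_diff (arr G) (darr G) (ab_class G)"
  "dobj (abelianization G) = dobj G"
  "gid (abelianization G) = (\<lambda>x. ab_class G (gid G x))"
  unfolding abelianization_def by simp_all

lemma src_abelianization [simp]: "g \<in> arr G \<Longrightarrow> gsrc (abelianization G) (ab_class G g) = gsrc G g"
  and tgt_abelianization [simp]: "g \<in> arr G \<Longrightarrow> gtgt (abelianization G) (ab_class G g) = gtgt G g"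
  using ab_classD[OF some_in_ab_class] unfolding abelianization_def by simp_all

lemma inv_abelianization [simp]:
  "g \<in> arr G \<Longrightarrow> ginv (abelianization G) (ab_class G g) = ab_class G (ginv G g)"
  using ab_class_inv[OF some_in_ab_class] unfolding abelianization_def by simp

lemma comp_abelianization [simp]:
  "a \<in> arr G \<Longrightarrow> b \<in> arr G \<Longrightarrow> gsrc G a = gtgt G b \<Longrightarrow>
   gcomp (abelianization G) (ab_class G a) (ab_class G b) = ab_class G (gcomp G a b)"
  using ab_class_comp[OF some_in_ab_class some_in_ab_class] unfolding abelianization_def by simp

lemma groupoid_abelianization: "groupoid (abelianization G)"
  unfolding groupoid_def composable_def abelianization_simps
  by (intro conjI) (auto simp: src_closed tgt_closed)

end

section \<open>Smooth maps between Euclidean domains\<close>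

lemma eopen_Int:
  assumes U: "eopen n U" and V: "eopen n V"
  shows "eopen n (U \<inter> V)"
  unfolding eopen_def
proof (intro conjI ballI)
  show "U \<inter> V \<subseteq> Eucl n"
    using U unfolding eopen_def by blast
next
  fix x assume x: "x \<in> U \<inter> V"
  obtain e1 where e1: "e1 > 0" "\<forall>y\<in>Eucl n. (\<forall>i<n. \<bar>y i - x i\<bar> < e1) \<longrightarrow> y \<in> U"
    using U x unfolding eopen_def by blast
  obtain e2 where e2: "e2 > 0" "\<forall>y\<in>Eucl n. (\<forall>i<n. \<bar>y i - x i\<bar> < e2) \<longrightarrow> y \<in> V"
    using V x unfolding eopen_def by blast
  show "\<exists>e>0. \<forall>y\<in>Eucl n. (\<forall>i<n. \<bar>y i - x i\<bar> < e) \<longrightarrow> y \<in> U \<inter> V"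
    using e1 e2 by (intro exI[of _ "min e1 e2"]) auto
qed

lemma econt_subset: "V \<subseteq> U \<Longrightarrow> econt n U f \<Longrightarrow> econt n V f"
  unfolding econt_def by (meson subsetD)

lemma Ck_subset: "V \<subseteq> U \<Longrightarrow> f \<in> Ck n U k \<Longrightarrow> f \<in> Ck n V k"
proof (induction k arbitrary: f)
  case 0
  then show ?case
    using econt_subset by simp
next
  case (Suc k)
  have "\<exists>g\<in>Ck n V k. has_pd V f i g" if i: "i < n" for i
  proof -
    obtain g where "g \<in> Ck n U k" "has_pd U f i g"
      using Suc.prems i by auto
    then show ?thesis
      using Suc.IH Suc.prems(1) unfolding has_pd_def by blast
  qed
  then show ?case
    using Suc.prems econt_subset by simp
qed

lemma smooth_map_subset: "smooth_map m U n F \<Longrightarrow> V \<subseteq> U \<Longrightarrow> smooth_map m V n F"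
  unfolding smooth_map_def smooth_fun_def using Ck_subset by blast

lemma Ck_const: "(\<lambda>_. c) \<in> Ck n U k"
proof (induction k arbitrary: c)
  case 0
  then show ?case
    by (simp add: econt_def)
next
  case (Suc k)
  have "has_pd U (\<lambda>_. c) i (\<lambda>_. 0)" for i
    unfolding has_pd_def by simp
  then show ?case
    using Suc.IH[of 0] by (auto simp: econt_def)
qed

lemma econt_coordinate: "j < n \<Longrightarrow> econt n U (\<lambda>x. x j)"
  unfolding econt_def by blast

lemma Ck_coordinate: "j < n \<Longrightarrow> (\<lambda>x. x j) \<in> Ck n U k"
proof (induction k)
  case 0
  then show ?case
    using econt_coordinate by simp
next
  case (Suc k)
  have "has_pd U (\<lambda>x. x j) i (\<lambda>_. if i = j then 1 else 0)" for i
    unfolding has_pd_def by (cases "i = j") (auto intro!: derivative_eq_intros)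
  then show ?case
    using Suc econt_coordinate Ck_const[of 1 n U k] Ck_const[of 0 n U k]
    by (auto intro!: bexI[of _ "\<lambda>_. if _ = j then 1 else 0"])
qed

lemma smooth_map_id: "eopen n V \<Longrightarrow> smooth_map n V n (\<lambda>x. x)"
  unfolding smooth_map_def smooth_fun_def eopen_def using Ck_coordinate by blast

lemma common_radius:
  fixes v :: "nat \<Rightarrow> real"
  assumes "\<forall>j<(n::nat). \<exists>d>0. \<forall>y. (\<forall>i<m. \<bar>y i - v i\<bar> < d) \<longrightarrow> Q j y"
  shows "\<exists>d>0. \<forall>y. (\<forall>i<m. \<bar>y i - v i\<bar> < d) \<longrightarrow> (\<forall>j<n. Q j y)"
  using assms
proof (induction n)
  case 0
  then show ?case
    by (intro exI[of _ "1::real"]) auto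
next
  case (Suc n)
  obtain d1 where d1: "d1 > 0" "\<forall>y. (\<forall>i<m. \<bar>y i - v i\<bar> < d1) \<longrightarrow> (\<forall>j<n. Q j y)"
    using Suc by auto
  obtain d2 where d2: "d2 > 0" "\<forall>y. (\<forall>i<m. \<bar>y i - v i\<bar> < d2) \<longrightarrow> Q n y"
    using Suc.prems by auto
  have "Q j y" if "\<forall>i<m. \<bar>y i - v i\<bar> < min d1 d2" "j < Suc n" for y j
    using d1 d2 that by (cases "j = n") auto
  then show ?case
    using d1(1) d2(1) by (intro exI[of _ "min d1 d2"]) auto
qed

lemma eopen_preimage_smooth_map:
  assumes V: "eopen m V" and F: "smooth_map m V n F" and W: "eopen n W"
  shows "eopen m {v\<in>V. F v \<in> W}"
  unfolding eopen_def
proof (intro conjI ballI)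
  show "{v \<in> V. F v \<in> W} \<subseteq> Eucl m"
    using V unfolding eopen_def by auto
next
  fix v assume v: "v \<in> {v \<in> V. F v \<in> W}"
  obtain e where e: "e > 0" "\<forall>y\<in>Eucl n. (\<forall>i<n. \<bar>y i - F v i\<bar> < e) \<longrightarrow> y \<in> W"
    using W v unfolding eopen_def by blast
  obtain eV where eV: "eV > 0" "\<forall>y\<in>Eucl m. (\<forall>i<m. \<bar>y i - v i\<bar> < eV) \<longrightarrow> y \<in> V"
    using V v unfolding eopen_def by blast
  have "\<forall>j<n. \<exists>d>0. \<forall>y. (\<forall>i<m. \<bar>y i - v i\<bar> < d) \<longrightarrow> (y \<in> V \<longrightarrow> \<bar>F y j - F v j\<bar> < e)"
  proof (intro allI impI)
    fix j assume "j < n"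
    then have "econt m V (\<lambda>x. F x j)"
      using F unfolding smooth_map_def smooth_fun_def by (metis Ck.simps(1) mem_Collect_eq)
    then show "\<exists>d>0. \<forall>y. (\<forall>i<m. \<bar>y i - v i\<bar> < d) \<longrightarrow> (y \<in> V \<longrightarrow> \<bar>F y j - F v j\<bar> < e)"
      unfolding econt_def using v e(1) by blast
  qed
  from common_radius[OF this] obtain d where d: "d > 0"
    "\<forall>y. (\<forall>i<m. \<bar>y i - v i\<bar> < d) \<longrightarrow> (\<forall>j<n. y \<in> V \<longrightarrow> \<bar>F y j - F v j\<bar> < e)"
    by blast
  show "\<exists>e>0. \<forall>y\<in>Eucl m. (\<forall>i<m. \<bar>y i - v i\<bar> < e) \<longrightarrow> y \<in> {v \<in> V. F v \<in> W}"
  proof (intro exI[of _ "min d eV"] conjI ballI impI)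
    fix y assume y: "y \<in> Eucl m" "\<forall>i<m. \<bar>y i - v i\<bar> < min d eV"
    then have "y \<in> V"
      using eV by auto
    moreover have "F y \<in> Eucl n"
      using F \<open>y \<in> V\<close> unfolding smooth_map_def by blast
    moreover have "\<forall>i<n. \<bar>F y i - F v i\<bar> < e"
      using d y \<open>y \<in> V\<close> by auto
    ultimately show "y \<in> {v \<in> V. F v \<in> W}"
      using e by auto
  qed (use d eV in auto)
qed

section \<open>Diffeologies and the quotient diffeology\<close>

lemma diffeology_plotD:
  "diffeology X D \<Longrightarrow> (n, U, P) \<in> D \<Longrightarrow> eopen n U \<and> P \<in> U \<rightarrow> X \<and> P \<in> extensional U"
  unfolding diffeology_def by (drule conjunct1) blast

lemma diffeology_plot_in: "diffeology X D \<Longrightarrow> (n, U, P) \<in> D \<Longrightarrow> u \<in> U \<Longrightarrow> P u \<in> X"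
  using diffeology_plotD by blast

lemma diffeology_const:
  "diffeology X D \<Longrightarrow> eopen n U \<Longrightarrow> x \<in> X \<Longrightarrow> (n, U, restrict (\<lambda>_. x) U) \<in> D"
  unfolding diffeology_def by (drule conjunct2, drule conjunct1) blast

lemma diffeology_local:
  "diffeology X D \<Longrightarrow> eopen n U \<Longrightarrow> P \<in> U \<rightarrow> X \<Longrightarrow> P \<in> extensional U \<Longrightarrow>
   (\<And>u. u \<in> U \<Longrightarrow> \<exists>V. eopen n V \<and> u \<in> V \<and> V \<subseteq> U \<and> (n, V, restrict P V) \<in> D) \<Longrightarrow>
   (n, U, P) \<in> D"
  unfolding diffeology_def by (drule conjunct2, drule conjunct2, drule conjunct1) blast

lemma diffeology_comp:
  assumes "diffeology X D" "(n, U, P) \<in> D" "eopen m V" "smooth_map m V n F" "F ` V \<subseteq> U"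
  shows "(m, V, restrict (P \<circ> F) V) \<in> D"
proof -
  have "\<forall>n U P m V F. (n, U, P) \<in> D \<and> eopen m V \<and> smooth_map m V n F \<and> F ` V \<subseteq> U
      \<longrightarrow> (m, V, restrict (P \<circ> F) V) \<in> D"
    using assms(1) unfolding diffeology_def by blast
  then show ?thesis
    using assms(2-) by blast
qed

lemma diffeology_restrict:
  assumes D: "diffeology X D" and P: "(n, U, P) \<in> D" and V: "eopen n V" "V \<subseteq> U"
  shows "(n, V, restrict P V) \<in> D"
  using diffeology_comp[OF D P V(1) smooth_map_id[OF V(1)]] V(2) by (simp add: comp_def)

lemma quot_diffI:
  assumes "eopen n U" "P \<in> extensional U" "P \<in> U \<rightarrow> q ` X"
    "\<And>u. u \<in> U \<Longrightarrow> \<exists>V Q. eopen n V \<and> u \<in> V \<and> V \<subseteq> U \<and> (n, V, Q) \<in> D \<and> (\<forall>v\<in>V. P v = q (Q v))"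
  shows "(n, U, P) \<in> quot_diff X D q"
  unfolding quot_diff_def using assms by blast

lemma quot_diffD:
  "(n, U, P) \<in> quot_diff X D q \<Longrightarrow> eopen n U \<and> P \<in> extensional U \<and> P \<in> U \<rightarrow> q ` X"
  unfolding quot_diff_def by blast

text \<open>Locally constant plots of the quotient also lift locally, to constant plots of X.\<close>

lemma quot_diff_local_lift:
  assumes D: "diffeology X D" and P: "(n, U, P) \<in> quot_diff X D q" and u: "u \<in> U"
  shows "\<exists>V Q. eopen n V \<and> u \<in> V \<and> V \<subseteq> U \<and> (n, V, Q) \<in> D \<and> (\<forall>v\<in>V. P v = q (Q v))"
proof -
  obtain V where V: "eopen n V" "u \<in> V" "V \<subseteq> U"
    and lift: "(\<exists>c. \<forall>v\<in>V. P v = c) \<or> (\<exists>Q. (n, V, Q) \<in> D \<and> (\<forall>v\<in>V. P v = q (Q v)))"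
    using P u unfolding quot_diff_def by blast
  show ?thesis
  proof (cases "\<exists>Q. (n, V, Q) \<in> D \<and> (\<forall>v\<in>V. P v = q (Q v))")
    case True
    then show ?thesis
      using V by blast
  next
    case False
    then obtain c where c: "\<forall>v\<in>V. P v = c"
      using lift by blast
    have "P u \<in> q ` X"
      using quot_diffD[OF P] u by blast
    then obtain x where x: "x \<in> X" "c = q x"
      using c V(2) by auto
    then show ?thesis
      using V c diffeology_const[OF D V(1) x(1)]
      by (intro exI[of _ V] exI[of _ "restrict (\<lambda>_. x) V"]) auto
  qed
qed

lemma quot_diff_of_plot:
  assumes D: "diffeology X D" and Q: "(n, U, Q) \<in> D"
  shows "(n, U, restrict (q \<circ> Q) U) \<in> quot_diff X D q"
  using diffeology_plotD[OF D Q] Q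
  by (intro quot_diffI) (auto intro!: exI[of _ U] exI[of _ Q])

lemma quot_diff_local:
  assumes D: "diffeology X D" and U: "eopen n U" "P \<in> U \<rightarrow> q ` X" "P \<in> extensional U"
    and local: "\<forall>u\<in>U. \<exists>V. eopen n V \<and> u \<in> V \<and> V \<subseteq> U \<and> (n, V, restrict P V) \<in> quot_diff X D q"
  shows "(n, U, P) \<in> quot_diff X D q"
proof (rule quot_diffI[OF U(1,3,2)])
  fix u assume u: "u \<in> U"
  then obtain V where V: "eopen n V" "u \<in> V" "V \<subseteq> U" "(n, V, restrict P V) \<in> quot_diff X D q"
    using local by blast
  obtain W Q where "eopen n W" "u \<in> W" "W \<subseteq> V" "(n, W, Q) \<in> D" "\<forall>v\<in>W. restrict P V v = q (Q v)"
    using quot_diff_local_lift[OF D V(4) V(2)] by blast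
  then show "\<exists>V Q. eopen n V \<and> u \<in> V \<and> V \<subseteq> U \<and> (n, V, Q) \<in> D \<and> (\<forall>v\<in>V. P v = q (Q v))"
    using V by (intro exI[of _ W] exI[of _ Q]) (auto simp: subset_iff)
qed

lemma quot_diff_comp:
  assumes D: "diffeology X D" and P: "(n, U, P) \<in> quot_diff X D q"
    and V: "eopen m V" and F: "smooth_map m V n F" "F ` V \<subseteq> U"
  shows "(m, V, restrict (P \<circ> F) V) \<in> quot_diff X D q"
proof (rule quot_diffI[OF V])
  show "restrict (P \<circ> F) V \<in> V \<rightarrow> q ` X"
    using F(2) quot_diffD[OF P] by (auto simp: Pi_iff image_subset_iff)
next
  fix v assume v: "v \<in> V"
  obtain W Q where W: "eopen n W" "F v \<in> W" "(n, W, Q) \<in> D" "\<forall>w\<in>W. P w = q (Q w)"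
    using quot_diff_local_lift[OF D P] v F(2) by blast
  define V' where "V' = {x\<in>V. F x \<in> W}"
  have V': "eopen m V'"
    unfolding V'_def by (rule eopen_preimage_smooth_map[OF V F(1) W(1)])
  have "(m, V', restrict (Q \<circ> F) V') \<in> D"
    by (rule diffeology_comp[OF D W(3) V' smooth_map_subset[OF F(1)]]) (auto simp: V'_def)
  moreover have "\<forall>x\<in>V'. restrict (P \<circ> F) V x = q (restrict (Q \<circ> F) V' x)"
    using W(4) by (auto simp: V'_def)
  ultimately show "\<exists>V'' Q'. eopen m V'' \<and> v \<in> V'' \<and> V'' \<subseteq> V \<and> (m, V'', Q') \<in> D \<and>
      (\<forall>x\<in>V''. restrict (P \<circ> F) V x = q (Q' x))"
    using V' v W(2) by (intro exI[of _ V']) (auto simp: V'_def)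
qed simp

lemma quot_diff_const:
  assumes D: "diffeology X D" and U: "eopen n U" and c: "c \<in> q ` X"
  shows "(n, U, restrict (\<lambda>_. c) U) \<in> quot_diff X D q"
proof -
  obtain x where "x \<in> X" "c = q x"
    using c by blast
  then show ?thesis
    using quot_diff_of_plot[OF D diffeology_const[OF D U], of x q]
    by (simp add: comp_def cong: restrict_cong)
qed

lemma diffeology_quot_diff:
  assumes D: "diffeology X D"
  shows "diffeology (q ` X) (quot_diff X D q)"
  unfolding diffeology_def
  by (intro conjI allI impI)
    (blast dest: quot_diffD intro: quot_diff_const[OF D] quot_diff_local[OF D] quot_diff_comp[OF D])+

lemma dsmooth_quot_diff_comp:
  assumes D: "diffeology X D" and h: "dsmooth DY D h"
  shows "dsmooth DY (quot_diff X D q) (\<lambda>y. q (h y))"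
  unfolding dsmooth_def
proof (intro allI impI)
  fix n U P assume "(n, U, P) \<in> DY"
  then have "(n, U, restrict (q \<circ> restrict (h \<circ> P) U) U) \<in> quot_diff X D q"
    using h quot_diff_of_plot[OF D] unfolding dsmooth_def by blast
  moreover have "restrict (q \<circ> restrict (h \<circ> P) U) U = restrict ((\<lambda>y. q (h y)) \<circ> P) U"
    by (auto simp: restrict_def)
  ultimately show "(n, U, restrict ((\<lambda>y. q (h y)) \<circ> P) U) \<in> quot_diff X D q"
    by simp
qed

lemma dsmooth_from_quot_diff:
  assumes D: "diffeology X D" and DY: "diffeology Y DY"
    and h: "dsmooth D DY h" "h \<in> X \<rightarrow> Y" and f: "\<And>x. x \<in> X \<Longrightarrow> f (q x) = h x"
  shows "dsmooth (quot_diff X D q) DY f"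
  unfolding dsmooth_def
proof (intro allI impI)
  fix n U P assume P: "(n, U, P) \<in> quot_diff X D q"
  show "(n, U, restrict (f \<circ> P) U) \<in> DY"
  proof (rule diffeology_local[OF DY])
    show "eopen n U"
      using quot_diffD[OF P] by blast
    show "restrict (f \<circ> P) U \<in> U \<rightarrow> Y"
    proof (rule Pi_I)
      fix u assume "u \<in> U"
      then obtain x where "x \<in> X" "P u = q x"
        using quot_diffD[OF P] by blast
      then show "restrict (f \<circ> P) U u \<in> Y"
        using \<open>u \<in> U\<close> h(2) f by (auto simp: Pi_iff)
    qed
  next
    fix u assume u: "u \<in> U"
    obtain V Q where V: "eopen n V" "u \<in> V" "V \<subseteq> U" "(n, V, Q) \<in> D" "\<forall>v\<in>V. P v = q (Q v)"
      using quot_diff_local_lift[OF D P u] by blast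
    have "(n, V, restrict (h \<circ> Q) V) \<in> DY"
      using h(1) V(4) unfolding dsmooth_def by blast
    moreover have "restrict (restrict (f \<circ> P) U) V = restrict (h \<circ> Q) V"
    proof (rule restrict_ext)
      fix v assume "v \<in> V"
      then show "restrict (f \<circ> P) U v = (h \<circ> Q) v"
        using V(3,5) f diffeology_plot_in[OF D V(4)] by auto
    qed
    ultimately show "\<exists>V. eopen n V \<and> u \<in> V \<and> V \<subseteq> U \<and> (n, V, restrict (restrict (f \<circ> P) U) V) \<in> DY"
      using V by metis
  qed simp
qed

lemma locally_subductive_at_quot_diff:
  assumes D: "diffeology X D" and x: "x \<in> X" and f: "locally_subductive_at D DY f x"
    and f': "\<And>y. y \<in> X \<Longrightarrow> f' (q y) = f y"
  shows "locally_subductive_at (quot_diff X D q) DY f' (q x)"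
  unfolding locally_subductive_at_def
proof (intro allI impI)
  fix n U P assume P: "(n, U, P) \<in> DY \<and> zvec \<in> U \<and> P zvec = f' (q x)"
  then obtain V Q where V: "eopen n V" "zvec \<in> V" "V \<subseteq> U" "(n, V, Q) \<in> D" "Q zvec = x"
    and lift: "\<forall>v\<in>V. f (Q v) = P v"
    using f f'[OF x] unfolding locally_subductive_at_def by metis
  have "\<forall>v\<in>V. f' (restrict (q \<circ> Q) V v) = P v"
    using lift f' diffeology_plot_in[OF D V(4)] by simp
  then show "\<exists>V Q'. eopen n V \<and> zvec \<in> V \<and> V \<subseteq> U \<and> (n, V, Q') \<in> quot_diff X D q \<and>
      Q' zvec = q x \<and> (\<forall>v\<in>V. f' (Q' v) = P v)"
    using V quot_diff_of_plot[OF D V(4)] by (intro exI[of _ V] exI[of _ "restrict (q \<circ> Q) V"]) auto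
qed

lemma prod_quot_diff_local_lift:
  assumes D: "diffeology X D" and E: "diffeology Y E"
    and P: "(n, U, P) \<in> prod_diff (quot_diff X D q) (quot_diff Y E r)" and u: "u \<in> U"
  shows "\<exists>V Q R. eopen n V \<and> u \<in> V \<and> V \<subseteq> U \<and> (n, V, Q) \<in> D \<and> (n, V, R) \<in> E \<and>
           (\<forall>v\<in>V. P v = (q (Q v), r (R v)))"
proof -
  have P1: "(n, U, restrict (fst \<circ> P) U) \<in> quot_diff X D q"
    and P2: "(n, U, restrict (snd \<circ> P) U) \<in> quot_diff Y E r"
    using P unfolding prod_diff_def by auto
  obtain V1 Q where V1: "eopen n V1" "u \<in> V1" "V1 \<subseteq> U" "(n, V1, Q) \<in> D"
    "\<forall>v\<in>V1. restrict (fst \<circ> P) U v = q (Q v)"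
    using quot_diff_local_lift[OF D P1 u] by blast
  obtain V2 R where V2: "eopen n V2" "u \<in> V2" "V2 \<subseteq> U" "(n, V2, R) \<in> E"
    "\<forall>v\<in>V2. restrict (snd \<circ> P) U v = r (R v)"
    using quot_diff_local_lift[OF E P2 u] by blast
  have "P v = (q (Q v), r (R v))" if v: "v \<in> V1 \<inter> V2" for v
  proof -
    have "v \<in> U"
      using v V1(3) by blast
    then show ?thesis
      using bspec[OF V1(5), of v] bspec[OF V2(5), of v] v by (simp add: prod_eq_iff)
  qed
  moreover have V: "eopen n (V1 \<inter> V2)"
    using eopen_Int[OF V1(1) V2(1)] .
  ultimately show ?thesis
    using V1(2,3) V2(2) diffeology_restrict[OF D V1(4) V] diffeology_restrict[OF E V2(4) V]
    by (intro exI[of _ "V1 \<inter> V2"] exI[of _ "restrict Q (V1 \<inter> V2)"] exI[of _ "restrict R (V1 \<inter> V2)"])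
      auto
qed

lemma prod_diff_pair:
  assumes D: "diffeology X D" and E: "diffeology Y E" and Q: "(n, V, Q) \<in> D" and R: "(n, V, R) \<in> E"
  shows "(n, V, restrict (\<lambda>v. (Q v, R v)) V) \<in> prod_diff D E"
proof -
  have "restrict (fst \<circ> restrict (\<lambda>v. (Q v, R v)) V) V = Q"
    and "restrict (snd \<circ> restrict (\<lambda>v. (Q v, R v)) V) V = R"
    using diffeology_plotD[OF D Q] diffeology_plotD[OF E R] by (auto simp: extensional_restrict cong: restrict_cong)
  then show ?thesis
    unfolding prod_diff_def using Q R diffeology_plotD[OF D Q] by auto
qed

lemma local_subduction_quot_diff:
  assumes D: "diffeology X D" and DY: "diffeology Y DY" and f: "local_subduction X D DY f" "f \<in> X \<rightarrow> Y"
    and f': "\<And>x. x \<in> X \<Longrightarrow> f' (q x) = f x"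
  shows "local_subduction (q ` X) (quot_diff X D q) DY f'"
proof -
  have smooth: "dsmooth D DY f" and local: "\<And>x. x \<in> X \<Longrightarrow> locally_subductive_at D DY f x"
    using f(1) unfolding local_subduction_def by auto
  have "locally_subductive_at (quot_diff X D q) DY f' (q x)" if x: "x \<in> X" for x
    by (rule locally_subductive_at_quot_diff[OF D x local[OF x]]) (rule f')
  moreover have "dsmooth (quot_diff X D q) DY f'"
    by (rule dsmooth_from_quot_diff[OF D DY smooth f(2)]) (rule f')
  ultimately show ?thesis
    unfolding local_subduction_def by blast
qed

section \<open>The abelianization as a diffeological groupoid\<close>

context groupoid_structure
begin

lemma dsmooth_comp_abelianization:
  assumes D: "diffeology (arr G) (darr G)"
    and comp: "dsmooth (sub_diff (prod_diff (darr G) (darr G)) (composable G)) (darr G)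
      (\<lambda>p. gcomp G (fst p) (snd p))"
  shows "dsmooth (sub_diff (prod_diff (darr (abelianization G)) (darr (abelianization G)))
      (composable (abelianization G))) (darr (abelianization G))
      (\<lambda>p. gcomp (abelianization G) (fst p) (snd p))"
  unfolding dsmooth_def
proof (intro allI impI)
  let ?H = "abelianization G" and ?q = "ab_class G"
  let ?compH = "\<lambda>p. gcomp ?H (fst p) (snd p)"
  fix n U P assume "(n, U, P) \<in> sub_diff (prod_diff (darr ?H) (darr ?H)) (composable ?H)"
  then have P: "(n, U, P) \<in> prod_diff (darr ?H) (darr ?H)" and PU: "P ` U \<subseteq> composable ?H"
    unfolding sub_diff_def by auto
  show "(n, U, restrict (?compH \<circ> P) U) \<in> darr ?H"
    unfolding abelianization_simps
  proof (rule quot_diffI)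
    show "eopen n U"
      using P unfolding prod_diff_def by blast
    show "restrict (?compH \<circ> P) U \<in> U \<rightarrow> ?q ` arr G"
    proof (rule Pi_I)
      fix u assume u: "u \<in> U"
      then have "P u \<in> composable ?H"
        using PU by blast
      then show "restrict (?compH \<circ> P) U u \<in> ?q ` arr G"
        using u groupoid_structure.comp_closed[OF groupoid_structure.intro[OF groupoid_abelianization]]
        unfolding composable_def abelianization_simps by (cases "P u") auto
    qed
  next
    fix u assume u: "u \<in> U"
    obtain V Q R where V: "eopen n V" "u \<in> V" "V \<subseteq> U" "(n, V, Q) \<in> darr G" "(n, V, R) \<in> darr G"
      and PV: "\<forall>v\<in>V. P v = (?q (Q v), ?q (R v))"
      using prod_quot_diff_local_lift[OF D D P[unfolded abelianization_simps] u] by blast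
    have QR: "Q v \<in> arr G" "R v \<in> arr G" if "v \<in> V" for v
      using diffeology_plot_in[OF D V(4) that] diffeology_plot_in[OF D V(5) that] .
    have composable: "gsrc G (Q v) = gtgt G (R v)" if v: "v \<in> V" for v
    proof -
      have "(?q (Q v), ?q (R v)) \<in> composable ?H"
        using PU PV V(3) v by (metis image_subset_iff subsetD)
      then show ?thesis
        using QR[OF v] unfolding composable_def by simp
    qed
    have "(n, V, restrict (\<lambda>v. (Q v, R v)) V) \<in> sub_diff (prod_diff (darr G) (darr G)) (composable G)"
      using prod_diff_pair[OF D D V(4,5)] QR composable unfolding sub_diff_def composable_def by auto
    then have "(n, V, restrict ((\<lambda>p. gcomp G (fst p) (snd p)) \<circ> restrict (\<lambda>v. (Q v, R v)) V) V) \<in> darr G"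
      using comp unfolding dsmooth_def by blast
    moreover have "\<forall>v\<in>V. restrict (?compH \<circ> P) U v
        = ?q (restrict ((\<lambda>p. gcomp G (fst p) (snd p)) \<circ> restrict (\<lambda>v. (Q v, R v)) V) V v)"
      using V(3) PV QR composable by auto
    ultimately show "\<exists>V Q. eopen n V \<and> u \<in> V \<and> V \<subseteq> U \<and> (n, V, Q) \<in> darr G \<and>
        (\<forall>v\<in>V. restrict (?compH \<circ> P) U v = ?q (Q v))"
      using V(1-3) by blast
  qed simp
qed

end

lemma diffeological_groupoid_abelianization:
  assumes "diffeological_groupoid G"
  shows "diffeological_groupoid (abelianization G)"
proof -
  have D: "diffeology (arr G) (darr G)" and DM: "diffeology (obj G) (dobj G)"
    and src: "dsmooth (darr G) (dobj G) (gsrc G)" and tgt: "dsmooth (darr G) (dobj G) (gtgt G)"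
    and id: "dsmooth (dobj G) (darr G) (gid G)" and inv: "dsmooth (darr G) (darr G) (ginv G)"
    and comp: "dsmooth (sub_diff (prod_diff (darr G) (darr G)) (composable G)) (darr G)
        (\<lambda>p. gcomp G (fst p) (snd p))"
    using assms unfolding diffeological_groupoid_def by auto
  interpret groupoid_structure G
    using assms unfolding diffeological_groupoid_def by unfold_locales blast
  have "dsmooth (quot_diff (arr G) (darr G) (ab_class G)) (dobj G) (gsrc (abelianization G))"
    by (rule dsmooth_from_quot_diff[OF D DM src]) (auto simp: src_closed)
  moreover have "dsmooth (quot_diff (arr G) (darr G) (ab_class G)) (dobj G) (gtgt (abelianization G))"
    by (rule dsmooth_from_quot_diff[OF D DM tgt]) (auto simp: tgt_closed)
  moreover have "dsmooth (quot_diff (arr G) (darr G) (ab_class G))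
      (quot_diff (arr G) (darr G) (ab_class G)) (ginv (abelianization G))"
    by (rule dsmooth_from_quot_diff[OF D diffeology_quot_diff[OF D] dsmooth_quot_diff_comp[OF D inv]]) auto
  ultimately show ?thesis
    unfolding diffeological_groupoid_def
    using groupoid_abelianization diffeology_quot_diff[OF D, of "ab_class G"] DM
      dsmooth_quot_diff_comp[OF D id, of "ab_class G"]
      dsmooth_comp_abelianization[OF D comp]
    by (simp add: abelianization_simps)
qed

theorem mainTheorem15:
  fixes G :: "('g, 'm) dgpd"
  assumes "locally_subductive_dgpd G"
  shows "locally_subductive_dgpd (abelianization G)"
proof -
  have dg: "diffeological_groupoid G"
    and src: "local_subduction (arr G) (darr G) (dobj G) (gsrc G)"
    and tgt: "local_subduction (arr G) (darr G) (dobj G) (gtgt G)"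
    using assms unfolding locally_subductive_dgpd_def by auto
  have D: "diffeology (arr G) (darr G)" and DM: "diffeology (obj G) (dobj G)"
    using dg unfolding diffeological_groupoid_def by auto
  interpret groupoid_structure G
    using dg unfolding diffeological_groupoid_def by unfold_locales blast
  have "local_subduction (arr (abelianization G)) (darr (abelianization G)) (dobj (abelianization G))
      (gsrc (abelianization G))"
    unfolding abelianization_simps by (rule local_subduction_quot_diff[OF D DM src]) (auto simp: src_closed)
  moreover have "local_subduction (arr (abelianization G)) (darr (abelianization G)) (dobj (abelianization G))
      (gtgt (abelianization G))"
    unfolding abelianization_simps by (rule local_subduction_quot_diff[OF D DM tgt]) (auto simp: tgt_closed)
  ultimately show ?thesis
    using diffeological_groupoid_abelianization[OF dg] unfolding locally_subductive_dgpd_def by blast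
qed

end
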